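(* Let $\mathcal{H}_A,\mathcal{H}_B,\mathcal{H}_C$ be finite-dimensional complex Hilbert spaces and let $U=\sum_{j=1}^r Q_j\otimes R_j$ be a matrix on $\mathcal{H}_A\otimes\mathcal{H}_B\otimes\mathcal{H}_C$, where $Q_1,\dots,Q_r$ are linearly independent matrices on $\mathcal{H}_A\otimes\mathcal{H}_B$ and $R_1,\dots,R_r$ are linearly independent matrices on $\mathcal{H}_C$. Suppose that $Q_1,\dots,Q_n$ ($n\le r$) are product matrices, i.e. $Q_j=X_j'\otimes Y_j'$ for some matrices $X_j'$ on $\mathcal{H}_A$ and $Y_j'$ on $\mathcal{H}_B$. Then there exists a decomposition $U=\sum_{i=1}^{\mathrm{sr}(U)}X_i\otimes Y_i\otimes Z_i$ with exactly $\mathrm{sr}(U)$ terms such that $X_j\otimes Y_j=Q_j$ for $j=1,\dots,n$.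
   Context: For a matrix $U$ on a tensor product $\mathcal{H}_1\otimes\cdots\otimes\mathcal{H}_m$ of finite-dimensional complex Hilbert spaces, its Schmidt rank $\mathrm{sr}(U)$ is the least integer $r$ such that $U=\sum_{j=1}^r A_{j,1}\otimes\cdots\otimes A_{j,m}$ with each $A_{j,i}$ a matrix on $\mathcal{H}_i$ (i.e. the tensor rank of $U$). *)

theory Defs
  imports Main "HOL.Complex"
begin

text \<open>A matrix on a finite-dimensional complex Hilbert space with orthonormal basis indexed
by the finite type 'i is a function 'i => 'i => complex (entries).\<close>

definition tens :: "('i \<Rightarrow> 'i \<Rightarrow> complex) \<Rightarrow> ('j \<Rightarrow> 'j \<Rightarrow> complex)
                     \<Rightarrow> ('i \<times> 'j \<Rightarrow> 'i \<times> 'j \<Rightarrow> complex)" where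
  "tens X Y = (\<lambda>(i1, i2) (j1, j2). X i1 j1 * Y i2 j2)"

definition lin_indep :: "nat \<Rightarrow> (nat \<Rightarrow> 'i \<Rightarrow> 'i \<Rightarrow> complex) \<Rightarrow> bool" where
  "lin_indep r M \<longleftrightarrow>
     (\<forall>c :: nat \<Rightarrow> complex. (\<lambda>i j. \<Sum>k<r. c k * M k i j) = (\<lambda>i j. 0) \<longrightarrow> (\<forall>k<r. c k = 0))"

definition schmidt_rank3 :: "(('a \<times> 'b) \<times> 'c \<Rightarrow> ('a \<times> 'b) \<times> 'c \<Rightarrow> complex) \<Rightarrow> nat" where
  "schmidt_rank3 U = (LEAST r. \<exists>(X :: nat \<Rightarrow> 'a \<Rightarrow> 'a \<Rightarrow> complex)
        (Y :: nat \<Rightarrow> 'b \<Rightarrow> 'b \<Rightarrow> complex) (Z :: nat \<Rightarrow> 'c \<Rightarrow> 'c \<Rightarrow> complex).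
        U = (\<lambda>i j. \<Sum>k<r. tens (tens (X k) (Y k)) (Z k) i j))"

end

theory Submission
  imports Defs "HOL-Library.Function_Algebras"
begin

text \<open>Let \<open>U = (\<Sum>k<s. P\<^sub>k \<otimes> C\<^sub>k)\<close> with \<open>s = sr(U)\<close> and every \<open>P\<^sub>k\<close> a product matrix.
  Contracting the third tensor factor against a linear functional \<open>g\<close> with \<open>g(R\<^sub>k) = \<delta>\<^sub>k\<^sub>l\<close>
  shows that each \<open>Q\<^sub>l\<close> lies in the span of the \<open>P\<^sub>k\<close>. So the independent \<open>Q\<^sub>1, \<dots>, Q\<^sub>n\<close> extend,
  by some of the \<open>P\<^sub>k\<close>, to a basis of that span with at most \<open>s\<close> elements, all of them products.
  Expanding every \<open>P\<^sub>k\<close> in this basis and collecting terms writes \<open>U\<close> as a sum over the basis,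
  which padded with zero terms has exactly \<open>s\<close> summands.\<close>

lemma sum_apply: "(\<Sum>k\<in>K. f k) x = (\<Sum>k\<in>K. f k x)"
  by (induction K rule: infinite_finite_induct) auto

lemma lambda_sum_apply2: "(\<lambda>i j. \<Sum>k\<in>K. M k i j) = (\<Sum>k\<in>K. M k)"
  by (simp add: fun_eq_iff sum_apply)

text \<open>Matrices are plain functions, which the library equips with no complex scalar action.\<close>

definition mscale :: "complex \<Rightarrow> ('i \<Rightarrow> 'j \<Rightarrow> complex) \<Rightarrow> ('i \<Rightarrow> 'j \<Rightarrow> complex)" where
  "mscale a M = (\<lambda>i j. a * M i j)"

interpretation matrix: vector_space "mscale :: complex \<Rightarrow> ('i \<Rightarrow> 'j \<Rightarrow> complex) \<Rightarrow> _"
  by unfold_locales (auto simp: mscale_def fun_eq_iff algebra_simps)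

interpretation matrix_functional:
  vector_space_pair "mscale :: complex \<Rightarrow> ('i \<Rightarrow> 'j \<Rightarrow> complex) \<Rightarrow> _" "(*) :: complex \<Rightarrow> complex \<Rightarrow> complex"
  by unfold_locales (auto simp: algebra_simps)

lemma tens_apply [simp]: "tens M Z (x, c) (y, c') = M x y * Z c c'"
  by (simp add: tens_def)

lemma tens_sum_left: "tens (\<Sum>k\<in>K. M k) Z = (\<Sum>k\<in>K. tens (M k) Z)"
  by (auto simp: fun_eq_iff sum_apply sum_distrib_right)

lemma tens_sum_right: "tens M (\<Sum>k\<in>K. Z k) = (\<Sum>k\<in>K. tens M (Z k))"
  by (auto simp: fun_eq_iff sum_apply sum_distrib_left)

lemma tens_mscale_left: "tens (mscale a M) Z = mscale a (tens M Z)"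
  by (auto simp: fun_eq_iff mscale_def tens_def)

lemma tens_mscale_right: "tens M (mscale a Z) = mscale a (tens M Z)"
  by (auto simp: fun_eq_iff mscale_def tens_def)

lemma tens_zero_right [simp]: "tens M 0 = 0"
  by (auto simp: fun_eq_iff)

lemma lin_indep_prefix:
  assumes "lin_indep r M" "n \<le> r"
  shows "lin_indep n M"
  unfolding lin_indep_def
proof (intro allI impI)
  fix c :: "nat \<Rightarrow> complex" and k
  assume zero: "(\<lambda>i j. \<Sum>k<n. c k * M k i j) = (\<lambda>i j. 0)" and "k < n"
  define c' where "c' k = (if k < n then c k else 0)" for k
  have "(\<lambda>i j. \<Sum>k<r. c' k * M k i j) = (\<lambda>i j. \<Sum>k<n. c k * M k i j)"
    using \<open>n \<le> r\<close> by (intro ext sum.mono_neutral_cong_right) (auto simp: c'_def)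
  then have "c' k = 0"
    using assms(1) \<open>k < n\<close> \<open>n \<le> r\<close> zero unfolding lin_indep_def by auto
  then show "c k = 0" using \<open>k < n\<close> by (simp add: c'_def)
qed

lemma lin_indep_imp_inj_on:
  assumes "lin_indep n M"
  shows "inj_on M {..<n}"
proof (rule inj_onI, rule ccontr)
  fix k l assume k: "k \<in> {..<n}" and l: "l \<in> {..<n}" and "M k = M l" "k \<noteq> l"
  define c where "c m = (if m = k then 1 else if m = l then -1 else 0 :: complex)" for m
  have "(\<Sum>m<n. c m * M m i j) = 0" for i j
  proof -
    have "(\<Sum>m<n. c m * M m i j)
        = (\<Sum>m<n. (if m = k then M k i j else 0) - (if m = l then M l i j else 0))"
      using \<open>k \<noteq> l\<close> by (intro sum.cong) (auto simp: c_def)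
    also have "\<dots> = 0" using k l \<open>M k = M l\<close> by (simp add: sum_subtractf)
    finally show ?thesis .
  qed
  then have "c k = 0" using assms k unfolding lin_indep_def by blast
  then show False by (simp add: c_def)
qed

lemma lin_indep_imp_independent:
  assumes "lin_indep n M"
  shows "matrix.independent (M ` {..<n})"
proof (rule matrix.independent_if_scalars_zero)
  fix f x assume sum: "(\<Sum>x\<in>M ` {..<n}. mscale (f x) x) = 0" and "x \<in> M ` {..<n}"
  have zero: "(\<lambda>i j. \<Sum>k<n. f (M k) * M k i j) = (\<lambda>i j. 0)"
    using sum by (simp add: sum.reindex lin_indep_imp_inj_on[OF assms] fun_eq_iff sum_apply mscale_def)
  have "\<forall>k<n. f (M k) = 0" using assms[unfolded lin_indep_def, rule_format, OF zero] by blast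
  with \<open>x \<in> M ` {..<n}\<close> show "f x = 0" by auto
qed simp

lemma lin_indep_dual_functional:
  assumes "lin_indep r M" "l < r"
  obtains g where "Vector_Spaces.linear mscale (*) g"
    and "\<And>k. k < r \<Longrightarrow> g (M k) = (if k = l then 1 else 0)"
proof -
  obtain g where linear: "Vector_Spaces.linear mscale (*) g"
    and g: "\<forall>x\<in>M ` {..<r}. g x = (if x = M l then 1 else 0)"
    using matrix_functional.linear_independent_extend[OF lin_indep_imp_independent[OF assms(1)],
        of "\<lambda>x. if x = M l then 1 else 0"] by blast
  show thesis
  proof (rule that[OF linear])
    fix k assume "k < r"
    then show "g (M k) = (if k = l then 1 else 0)"
      using g assms(2) inj_on_eq_iff[OF lin_indep_imp_inj_on[OF assms(1)]] by auto
  qed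
qed

definition contract_right :: "(('c \<Rightarrow> 'c \<Rightarrow> complex) \<Rightarrow> complex)
    \<Rightarrow> ('i \<times> 'c \<Rightarrow> 'i \<times> 'c \<Rightarrow> complex) \<Rightarrow> ('i \<Rightarrow> 'i \<Rightarrow> complex)" where
  "contract_right g M = (\<lambda>x y. g (\<lambda>c c'. M (x, c) (y, c')))"

lemma contract_right_sum_tens:
  assumes "Vector_Spaces.linear mscale (*) g"
  shows "contract_right g (\<Sum>k\<in>K. tens (P k) (C k)) = (\<Sum>k\<in>K. mscale (g (C k)) (P k))"
proof -
  have slice: "(\<lambda>c c'. (\<Sum>k\<in>K. tens (P k) (C k)) (x, c) (y, c')) = (\<Sum>k\<in>K. mscale (P k x y) (C k))"
    for x y by (simp add: fun_eq_iff sum_apply mscale_def)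
  have "contract_right g (\<Sum>k\<in>K. tens (P k) (C k)) = (\<lambda>x y. g (\<Sum>k\<in>K. mscale (P k x y) (C k)))"
    unfolding contract_right_def slice ..
  also have "\<dots> = (\<lambda>x y. \<Sum>k\<in>K. P k x y * g (C k))"
    by (simp add: matrix_functional.linear_sum[OF assms] matrix_functional.linear_scale[OF assms])
  also have "\<dots> = (\<Sum>k\<in>K. mscale (g (C k)) (P k))"
    by (simp add: fun_eq_iff sum_apply mscale_def mult.commute)
  finally show ?thesis .
qed

lemma left_factor_in_span:
  assumes eq: "(\<Sum>k<r. tens (Q k) (R k)) = (\<Sum>k\<in>K. tens (P k) (C k))"
    and "lin_indep r R" "l < r"
  shows "Q l \<in> matrix.span (P ` K)"
proof -
  obtain g where g: "Vector_Spaces.linear mscale (*) g"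
    and dual: "\<And>k. k < r \<Longrightarrow> g (R k) = (if k = l then 1 else 0)"
    using lin_indep_dual_functional assms(2,3) by blast
  have "Q l = (\<Sum>k<r. mscale (g (R k)) (Q k))"
    using \<open>l < r\<close> by (simp add: dual if_distrib[of "\<lambda>a. mscale a _"] cong: if_cong)
  also have "\<dots> = (\<Sum>k\<in>K. mscale (g (C k)) (P k))"
    using arg_cong[OF eq, of "contract_right g"] by (simp add: contract_right_sum_tens[OF g])
  also have "\<dots> \<in> matrix.span (P ` K)"
    by (intro matrix.span_sum matrix.span_scale matrix.span_base) auto
  finally show ?thesis .
qed

context vector_space
begin

lemma independent_extend_within_span:
  assumes "finite T" "independent S" "S \<subseteq> span T"
  obtains B where "S \<subseteq> B" "B \<subseteq> S \<union> T" "finite B" "card B \<le> card T" "T \<subseteq> span B"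
proof -
  obtain B where B: "S \<subseteq> B" "B \<subseteq> S \<union> T" "independent B" "S \<union> T \<subseteq> span B"
    using maximal_independent_subset_extend[of S "S \<union> T"] assms(2) by blast
  have "B \<subseteq> span T" using B(2) assms(3) span_superset[of T] by blast
  then have "finite B" "card B \<le> card T"
    using independent_span_bound[OF assms(1) B(3)] by simp_all
  with B show thesis using that by blast
qed

end

lemma sum_tens_regroup:
  assumes "finite B" "\<And>k. k \<in> K \<Longrightarrow> P k \<in> matrix.span B"
  obtains D where "(\<Sum>k\<in>K. tens (P k) (C k)) = (\<Sum>v\<in>B. tens v (D v))"
proof -
  have "\<forall>k\<in>K. \<exists>u. P k = (\<Sum>v\<in>B. mscale (u v) v)"
    using assms by (auto simp: matrix.span_finite)
  then obtain u where u: "\<And>k. k \<in> K \<Longrightarrow> P k = (\<Sum>v\<in>B. mscale (u k v) v)"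
    by metis
  have "(\<Sum>k\<in>K. tens (P k) (C k)) = (\<Sum>k\<in>K. \<Sum>v\<in>B. tens v (mscale (u k v) (C k)))"
    by (simp add: u tens_sum_left tens_mscale_left tens_mscale_right)
  also have "\<dots> = (\<Sum>v\<in>B. tens v (\<Sum>k\<in>K. mscale (u k v) (C k)))"
    by (simp add: sum.swap[of _ B] tens_sum_right)
  finally show thesis by (rule that)
qed

lemma enumeration_extending:
  assumes "finite B" "inj_on q {..<n}" "q ` {..<n} \<subseteq> B"
  obtains g where "bij_betw g {..<card B} B" "n \<le> card B" "\<And>k. k < n \<Longrightarrow> g k = q k"
proof -
  obtain xs where xs: "set xs = B - q ` {..<n}" "distinct xs"
    using finite_distinct_list[of "B - q ` {..<n}"] assms(1) by blast
  define ys where "ys = map q [0..<n] @ xs"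
  have "distinct ys" "set ys = B"
    using xs assms(2,3) by (auto simp: ys_def distinct_map atLeast0LessThan)
  then have "bij_betw ((!) ys) {..<card B} B"
    by (intro bij_betw_nth) (auto simp: distinct_card[symmetric])
  moreover have "n \<le> card B"
    using \<open>distinct ys\<close> \<open>set ys = B\<close> distinct_card[of ys] by (simp add: ys_def)
  moreover have "ys ! k = q k" if "k < n" for k
    using that by (simp add: ys_def nth_append)
  ultimately show thesis by (rule that)
qed

lemma sum_tens_products_padded:
  fixes D :: "('a \<times> 'b \<Rightarrow> 'a \<times> 'b \<Rightarrow> complex) \<Rightarrow> 'c \<Rightarrow> 'c \<Rightarrow> complex"
    and m s :: nat
  assumes g: "bij_betw g {..<m} B" and "m \<le> s" and products: "\<forall>v\<in>B. \<exists>x y. v = tens x y"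
  obtains X Y Z where "(\<Sum>v\<in>B. tens v (D v)) = (\<Sum>k<s. tens (tens (X k) (Y k)) (Z k))"
    and "\<And>k. k < m \<Longrightarrow> tens (X k) (Y k) = g k"
proof -
  obtain x y where xy: "\<And>v. v \<in> B \<Longrightarrow> v = tens (x v) (y v)"
    using products by metis
  define Z where "Z k = (if k < m then D (g k) else 0)" for k
  have gB: "g k \<in> B" if "k < m" for k
    using g that by (auto simp: bij_betw_def)
  have "(\<Sum>v\<in>B. tens v (D v)) = (\<Sum>k<m. tens (g k) (D (g k)))"
    using sum.reindex_bij_betw[OF g, of "\<lambda>v. tens v (D v)"] by simp
  also have "\<dots> = (\<Sum>k<s. tens (tens (x (g k)) (y (g k))) (Z k))"
  proof (rule sum.mono_neutral_cong_left)
    show "\<forall>k\<in>{..<s} - {..<m}. tens (tens (x (g k)) (y (g k))) (Z k) = 0"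
      by (simp add: Z_def)
    show "tens (g k) (D (g k)) = tens (tens (x (g k)) (y (g k))) (Z k)" if "k \<in> {..<m}" for k
      using that gB xy by (simp add: Z_def)
  qed (use \<open>m \<le> s\<close> in auto)
  finally show thesis
    using that[of "\<lambda>k. x (g k)" "\<lambda>k. y (g k)" Z] gB xy by auto
qed

definition matrix_unit :: "'i \<Rightarrow> 'i \<Rightarrow> 'i \<Rightarrow> 'i \<Rightarrow> complex" where
  "matrix_unit p q = (\<lambda>x y. if x = p \<and> y = q then 1 else 0)"

lemma tens_matrix_unit: "tens (matrix_unit p q) (matrix_unit p' q') = matrix_unit (p, p') (q, q')"
  by (auto simp: fun_eq_iff matrix_unit_def)

lemma matrix_unit_expansion:
  fixes M :: "'i::finite \<Rightarrow> 'i \<Rightarrow> complex"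
  shows "M = (\<Sum>e\<in>UNIV. mscale (M (fst e) (snd e)) (matrix_unit (fst e) (snd e)))"
proof -
  have "(\<Sum>e\<in>UNIV. if x = fst e \<and> y = snd e then M (fst e) (snd e) else 0)
      = (\<Sum>e\<in>UNIV. if e = (x, y) then M x y else 0)" for x y
    by (rule sum.cong) auto
  then show ?thesis
    by (simp add: fun_eq_iff sum_apply mscale_def matrix_unit_def if_distrib cong: if_cong)
qed

lemma ex_product_decomposition:
  fixes U :: "('a::finite \<times> 'b::finite) \<times> 'c::finite \<Rightarrow> ('a \<times> 'b) \<times> 'c \<Rightarrow> complex"
  shows "\<exists>N (X :: nat \<Rightarrow> 'a \<Rightarrow> 'a \<Rightarrow> complex) (Y :: nat \<Rightarrow> 'b \<Rightarrow> 'b \<Rightarrow> complex)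
        (Z :: nat \<Rightarrow> 'c \<Rightarrow> 'c \<Rightarrow> complex). U = (\<Sum>k<N. tens (tens (X k) (Y k)) (Z k))"
proof -
  let ?E = "UNIV :: ((('a \<times> 'b) \<times> 'c) \<times> (('a \<times> 'b) \<times> 'c)) set"
  obtain h where h: "bij_betw h {..<card ?E} ?E"
    using ex_bij_betw_nat_finite[of ?E] by (auto simp: atLeast0LessThan)
  define X where "X k = matrix_unit (fst (fst (fst (h k)))) (fst (fst (snd (h k))))" for k
  define Y where "Y k = matrix_unit (snd (fst (fst (h k)))) (snd (fst (snd (h k))))" for k
  define Z where "Z k = mscale (U (fst (h k)) (snd (h k))) (matrix_unit (snd (fst (h k))) (snd (snd (h k))))" for k
  define F where "F e = mscale (U (fst e) (snd e)) (matrix_unit (fst e) (snd e))" for e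
  have "U = (\<Sum>e\<in>?E. F e)"
    unfolding F_def by (rule matrix_unit_expansion)
  also have "\<dots> = (\<Sum>k<card ?E. F (h k))"
    by (rule sum.reindex_bij_betw[OF h, symmetric])
  also have "\<dots> = (\<Sum>k<card ?E. tens (tens (X k) (Y k)) (Z k))"
    by (simp add: F_def X_def Y_def Z_def tens_mscale_right tens_matrix_unit)
  finally show ?thesis by blast
qed

lemma schmidt_rank3_decomposition:
  fixes U :: "('a::finite \<times> 'b::finite) \<times> 'c::finite \<Rightarrow> ('a \<times> 'b) \<times> 'c \<Rightarrow> complex"
  obtains X :: "nat \<Rightarrow> 'a \<Rightarrow> 'a \<Rightarrow> complex" and Y :: "nat \<Rightarrow> 'b \<Rightarrow> 'b \<Rightarrow> complex"
    and Z :: "nat \<Rightarrow> 'c \<Rightarrow> 'c \<Rightarrow> complex"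
  where "U = (\<Sum>k<schmidt_rank3 U. tens (tens (X k) (Y k)) (Z k))"
proof -
  have "\<exists>X Y Z. U = (\<Sum>k<schmidt_rank3 U. tens (tens (X k) (Y k)) (Z k))"
    unfolding schmidt_rank3_def lambda_sum_apply2 by (rule LeastI_ex) (rule ex_product_decomposition)
  then show thesis using that by blast
qed

theorem corollary2:
  fixes Q :: "nat \<Rightarrow> ('a::finite \<times> 'b::finite) \<Rightarrow> ('a \<times> 'b) \<Rightarrow> complex"
    and R :: "nat \<Rightarrow> 'c::finite \<Rightarrow> 'c \<Rightarrow> complex"
    and U :: "('a \<times> 'b) \<times> 'c \<Rightarrow> ('a \<times> 'b) \<times> 'c \<Rightarrow> complex"
    and X' :: "nat \<Rightarrow> 'a \<Rightarrow> 'a \<Rightarrow> complex"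
    and Y' :: "nat \<Rightarrow> 'b \<Rightarrow> 'b \<Rightarrow> complex"
    and r n :: nat
  assumes "U = (\<lambda>i j. \<Sum>k<r. tens (Q k) (R k) i j)"
    and "lin_indep r Q"
    and "lin_indep r R"
    and "n \<le> r"
    and "\<forall>j<n. Q j = tens (X' j) (Y' j)"
  shows "\<exists>(X :: nat \<Rightarrow> 'a \<Rightarrow> 'a \<Rightarrow> complex) (Y :: nat \<Rightarrow> 'b \<Rightarrow> 'b \<Rightarrow> complex)
            (Z :: nat \<Rightarrow> 'c \<Rightarrow> 'c \<Rightarrow> complex).
           U = (\<lambda>i j. \<Sum>k<schmidt_rank3 U. tens (tens (X k) (Y k)) (Z k) i j)
         \<and> (\<forall>j<n. tens (X j) (Y j) = Q j)"
proof -
  define s where "s = schmidt_rank3 U"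
  obtain A B C where decomp: "U = (\<Sum>k<s. tens (tens (A k) (B k)) (C k))"
    unfolding s_def by (rule schmidt_rank3_decomposition)
  define P where "P k = tens (A k) (B k)" for k
  have U_eq: "(\<Sum>k<r. tens (Q k) (R k)) = (\<Sum>k<s. tens (P k) (C k))"
    using assms(1) decomp by (simp add: P_def lambda_sum_apply2)
  have Q_indep: "lin_indep n Q"
    using assms(2,4) by (rule lin_indep_prefix)
  have Q_span: "Q ` {..<n} \<subseteq> matrix.span (P ` {..<s})"
    using left_factor_in_span[OF U_eq assms(3)] assms(4) by auto
  obtain Bs where Bs: "Q ` {..<n} \<subseteq> Bs" "Bs \<subseteq> Q ` {..<n} \<union> P ` {..<s}" "finite Bs"
      "card Bs \<le> card (P ` {..<s})" "P ` {..<s} \<subseteq> matrix.span Bs"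
    by (rule matrix.independent_extend_within_span[OF _ lin_indep_imp_independent[OF Q_indep] Q_span])
      simp
  have "card Bs \<le> s"
    using Bs(4) card_image_le[of "{..<s}" P] by simp
  have products: "\<forall>v\<in>Bs. \<exists>x y. v = tens x y"
  proof
    fix v assume "v \<in> Bs"
    with Bs(2) obtain j where "j < n \<and> v = Q j \<or> j < s \<and> v = P j" by blast
    with assms(5) show "\<exists>x y. v = tens x y" unfolding P_def by blast
  qed
  obtain D where D: "(\<Sum>k<s. tens (P k) (C k)) = (\<Sum>v\<in>Bs. tens v (D v))"
    by (rule sum_tens_regroup[OF Bs(3), of "{..<s}" P C]) (use Bs(5) in blast)
  obtain g where g: "bij_betw g {..<card Bs} Bs" "n \<le> card Bs" "\<And>k. k < n \<Longrightarrow> g k = Q k"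
    using enumeration_extending[OF Bs(3) lin_indep_imp_inj_on[OF Q_indep] Bs(1)] by blast
  obtain X Y Z where XYZ: "(\<Sum>v\<in>Bs. tens v (D v)) = (\<Sum>k<s. tens (tens (X k) (Y k)) (Z k))"
    and XY: "\<And>k. k < card Bs \<Longrightarrow> tens (X k) (Y k) = g k"
    using sum_tens_products_padded[OF g(1) \<open>card Bs \<le> s\<close> products] by blast
  have "U = (\<Sum>k<s. tens (tens (X k) (Y k)) (Z k))"
    using decomp D XYZ by (simp add: P_def)
  moreover have "\<forall>j<n. tens (X j) (Y j) = Q j"
    using XY g(2,3) by simp
  ultimately show ?thesis
    unfolding s_def lambda_sum_apply2 by blast
qed

end
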